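(* Let $\lambda \geq 0$, $0 \leq \gamma \leq 1$, $0\leq \beta<1$, $\tau \in \mathbb{C}\setminus\{0\}$, $\delta \in \mathbb{N}_0=\{0,1,2,\dots\}$ and $m \in \mathbb{N}$. Let $f(z)=z+\sum_{k=1}^{\infty} a_{mk+1}z^{mk+1}$ belong to the class $\Theta_{\Sigma_m}(\tau,\lambda,\gamma,\delta;\beta)$. Then $$|a_{m+1}| \leq \min\left\{\frac{2|\tau|(1-\beta)}{(\delta+1)\left(1+m(\lambda+\gamma)+\lambda\gamma\left((m+1)^2+1\right)\right)},\ 2\sqrt{\frac{2|\tau|(1-\beta)}{(\delta+1)(\delta+2)(m+1)\Phi_1(\lambda,\gamma,m)}}\right\}$$ and $$|a_{2m+1}| \leq \frac{4|\tau|(1-\beta)}{(\delta+1)(\delta+2)\left(1+2(\lambda+\gamma)m+\lambda\gamma\left((2m+1)^2+1\right)\right)},$$ where $\Phi_1(\lambda,\gamma,m)=1+2(\lambda+\gamma)m+\lambda\gamma\left((2m+1)^2+1\right)$.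
   Context: Let $\mathbb{U}=\{z\in\mathbb{C}:|z|<1\}$ and $m\in\mathbb{N}$. $\mathcal{A}_m$ denotes the class of functions analytic in $\mathbb{U}$ of the form $f(z)=z+\sum_{k=1}^{\infty}a_{mk+1}z^{mk+1}$. $\Sigma_m$ denotes the class of $m$-fold symmetric bi-univalent functions: functions $f\in\mathcal{A}_m$ univalent in $\mathbb{U}$ whose inverse $f^{-1}$ extends to a univalent function $g$ on $\mathbb{U}$; this $g$ has the expansion $g(w)=w-a_{m+1}w^{m+1}+\left[(m+1)a_{m+1}^2-a_{2m+1}\right]w^{2m+1}-\cdots$. For $\delta\in\mathbb{N}_0$ and $h(z)=z+\sum_{k\ge1}c_{mk+1}z^{mk+1}$ analytic in $\mathbb{U}$, the $m$-fold Ruscheweyh derivative is $\mathcal{R}^\delta h(z)=z+\sum_{k=1}^{\infty}\frac{\Gamma(\delta+k+1)}{\Gamma(k+1)\Gamma(\delta+1)}c_{mk+1}z^{mk+1}$. For such $h$ and parameters $\lambda,\gamma,\tau\neq0,\delta$, put $$J_h(z)=1+\frac{1}{\tau}\Big[(1-\lambda)(1-\gamma)\frac{\mathcal{R}^\delta h(z)}{z}+(\lambda(\gamma+1)+\gamma)(\mathcal{R}^\delta h)'(z)+\lambda\gamma\big(z(\mathcal{R}^\delta h)''(z)-2\big)-1\Big].$$ For $0\le\beta<1$, $\Theta_{\Sigma_m}(\tau,\lambda,\gamma,\delta;\beta)$ is the set of $f\in\Sigma_m$ such that $\operatorname{Re}J_f(z)>\beta$ for all $z\in\mathbb{U}$ and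 $\operatorname{Re}J_g(w)>\beta$ for all $w\in\mathbb{U}$, where $g$ is the extension of $f^{-1}$ to $\mathbb{U}$. *)

theory Defs
  imports "HOL-Analysis.Analysis"
begin

definition tcoef :: "(complex \<Rightarrow> complex) \<Rightarrow> nat \<Rightarrow> complex" where
  "tcoef h n = (deriv ^^ n) h 0 / of_nat (fact n)"

text \<open>The class A_m: analytic in the unit disc, normalised, with Taylor expansion
  z + sum over k of a_(mk+1) z^(mk+1) (all other coefficients vanish).\<close>
definition A_m :: "nat \<Rightarrow> (complex \<Rightarrow> complex) \<Rightarrow> bool" where
  "A_m m h \<longleftrightarrow> h holomorphic_on ball 0 1 \<and> h 0 = 0 \<and> tcoef h 1 = 1 \<and>
     (\<forall>n. n mod m \<noteq> 1 mod m \<longrightarrow> tcoef h n = 0)"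

definition inv_ext :: "(complex \<Rightarrow> complex) \<Rightarrow> (complex \<Rightarrow> complex) \<Rightarrow> bool" where
  "inv_ext f g \<longleftrightarrow> g holomorphic_on ball 0 1 \<and> inj_on g (ball 0 1) \<and>
     (\<forall>z\<in>ball 0 1. f z \<in> ball 0 1 \<longrightarrow> g (f z) = z)"

definition Sigma_m :: "nat \<Rightarrow> (complex \<Rightarrow> complex) \<Rightarrow> bool" where
  "Sigma_m m f \<longleftrightarrow> A_m m f \<and> inj_on f (ball 0 1) \<and> (\<exists>g. inv_ext f g)"

text \<open>The m-fold Ruscheweyh derivative divided by z, i.e.
  1 + sum_k Gamma(delta+k+1)/(Gamma(k+1) Gamma(delta+1)) c_(mk+1) z^(mk);
  for natural delta the Gamma quotient equals (delta+k choose k).\<close>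
definition rusch_quot :: "nat \<Rightarrow> nat \<Rightarrow> (complex \<Rightarrow> complex) \<Rightarrow> complex \<Rightarrow> complex" where
  "rusch_quot m \<delta> h z = 1 + (\<Sum>k. of_nat ((\<delta> + Suc k) choose (Suc k)) * tcoef h (m * Suc k + 1) * z ^ (m * Suc k))"

definition rusch :: "nat \<Rightarrow> nat \<Rightarrow> (complex \<Rightarrow> complex) \<Rightarrow> complex \<Rightarrow> complex" where
  "rusch m \<delta> h z = z * rusch_quot m \<delta> h z"

definition J_fun :: "nat \<Rightarrow> complex \<Rightarrow> real \<Rightarrow> real \<Rightarrow> nat \<Rightarrow> (complex \<Rightarrow> complex) \<Rightarrow> complex \<Rightarrow> complex" where
  "J_fun m \<tau> lam \<gamma> \<delta> h z = 1 + (1 / \<tau>) *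
     (of_real ((1 - lam) * (1 - \<gamma>)) * rusch_quot m \<delta> h z
      + of_real (lam * (\<gamma> + 1) + \<gamma>) * deriv (rusch m \<delta> h) z
      + of_real (lam * \<gamma>) * (z * deriv (deriv (rusch m \<delta> h)) z - 2) - 1)"

definition Theta :: "nat \<Rightarrow> complex \<Rightarrow> real \<Rightarrow> real \<Rightarrow> nat \<Rightarrow> real \<Rightarrow> (complex \<Rightarrow> complex) \<Rightarrow> bool" where
  "Theta m \<tau> lam \<gamma> \<delta> \<beta> f \<longleftrightarrow> Sigma_m m f \<and>
     (\<exists>g. inv_ext f g \<and>
        (\<forall>z\<in>ball 0 1. Re (J_fun m \<tau> lam \<gamma> \<delta> f z) > \<beta>) \<and>
        (\<forall>w\<in>ball 0 1. Re (J_fun m \<tau> lam \<gamma> \<delta> g w) > \<beta>))"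

definition Phi1 :: "real \<Rightarrow> real \<Rightarrow> nat \<Rightarrow> real" where
  "Phi1 lam \<gamma> m = 1 + 2 * (lam + \<gamma>) * real m + lam * \<gamma> * ((2 * real m + 1)^2 + 1)"

end

theory Submission
  imports Defs "HOL-Complex_Analysis.Complex_Analysis"
begin

text \<open>For analytic
  \<open>h\<close>, \<open>J\<^sub>h\<close> is analytic with \<open>J\<^sub>h(0) = 1\<close>, and its Taylor coefficient at \<open>n = m k\<close> is
  \<open>W(n) / \<tau>\<close> times \<open>(\<delta> + k choose k)\<close> times the coefficient of \<open>z\<^sup>n\<^sup>+\<^sup>1\<close> in \<open>h\<close>; by
  Caratheodory's lemma each such coefficient has modulus at most \<open>2 (1 - \<beta>)\<close>. Writing
  \<open>a\<close>, \<open>c\<close> for the coefficients of \<open>z\<^sup>m\<^sup>+\<^sup>1\<close> and \<open>z\<^sup>2\<^sup>m\<^sup>+\<^sup>1\<close> in \<open>f\<close>, comparing coefficients in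
  \<open>g (f z) = z\<close> shows that \<open>g\<close> has \<open>(m + 1) a\<^sup>2 - c\<close> as its coefficient of \<open>z\<^sup>2\<^sup>m\<^sup>+\<^sup>1\<close>. The
  estimates for \<open>f\<close> at \<open>n = m\<close> and \<open>n = 2 m\<close> bound \<open>a\<close> and \<open>c\<close>; adding the estimates for \<open>c\<close>
  and \<open>(m + 1) a\<^sup>2 - c\<close> bounds \<open>(m + 1) a\<^sup>2\<close>, which gives the square-root bound.\<close>

lemma circlepath_0_cis: "circlepath 0 r t = of_real r * cis (2 * pi * t)"
  by (simp add: circlepath cis_conv_exp mult_ac)

lemma vector_derivative_circlepath_0_cis:
  "t \<in> {0..1} \<Longrightarrow>
   vector_derivative (circlepath 0 r) (at t within {0..1}) = 2 * pi * \<i> * r * cis (2 * pi * t)"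
  by (simp add: vector_derivative_circlepath01 cis_conv_exp mult_ac)

lemma has_integral_circle_Taylor_coeff:
  fixes q :: "complex \<Rightarrow> complex" and r :: real
  assumes hol: "q holomorphic_on ball 0 1" and r: "0 < r" "r < 1"
  shows "((\<lambda>t. q (r * cis (2 * pi * t)) * cnj (cis (2 * pi * t)) ^ n)
           has_integral r ^ n * ((deriv ^^ n) q 0 / fact n)) {0..1}"
proof -
  have "continuous_on (cball 0 r) q"
    using holomorphic_on_imp_continuous_on[OF hol] by (rule continuous_on_subset) (use r in auto)
  moreover have "q holomorphic_on ball 0 r"
    using hol by (rule holomorphic_on_subset) (use r in auto)
  ultimately have "((\<lambda>u. q u / (u - 0) ^ Suc n) has_contour_integral
                     (2 * pi * \<i> / fact n * (deriv ^^ n) q 0)) (circlepath 0 r)"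
    by (rule Cauchy_has_contour_integral_higher_derivative_circlepath) (use r in simp)
  moreover have "cis x ^ n * cnj (cis x) ^ n = 1" for x
    by (simp add: power_mult_distrib[symmetric] cis_cnj cis_mult)
  ultimately have "((\<lambda>t. (2 * pi * \<i> / r ^ n) * (q (r * cis (2 * pi * t)) * cnj (cis (2 * pi * t)) ^ n))
               has_integral (2 * pi * \<i> / fact n * (deriv ^^ n) q 0)) {0..1}"
    unfolding has_contour_integral_def
    by (elim has_integral_eq[rotated])
       (use r in \<open>simp add: circlepath_0_cis vector_derivative_circlepath_0_cis
                   field_simps\<close>)
  from has_integral_mult_right[OF this, of "r ^ n / (2 * pi * \<i>)"] show ?thesis
    using r by (simp add: field_simps)
qed

lemma has_integral_circle_Taylor_coeff_negative:
  fixes q :: "complex \<Rightarrow> complex" and r :: real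
  assumes hol: "q holomorphic_on ball 0 1" and r: "0 < r" "r < 1" and n: "n \<ge> 1"
  shows "((\<lambda>t. q (r * cis (2 * pi * t)) * cis (2 * pi * t) ^ n) has_integral 0) {0..1}"
proof -
  have "((\<lambda>u. q u * u ^ (n - 1)) has_contour_integral 0) (circlepath 0 r)"
    by (rule Cauchy_theorem_starlike_simple[of "ball 0 1"])
       (use r in \<open>auto intro!: holomorphic_intros hol convex_imp_starlike
                   simp: path_image_circlepath_nonneg\<close>)
  then have "((\<lambda>t. (2 * pi * \<i> * r ^ n) * (q (r * cis (2 * pi * t)) * cis (2 * pi * t) ^ n))
               has_integral 0) {0..1}"
    unfolding has_contour_integral_def
    by (rule has_integral_eq[rotated])
       (use n in \<open>auto simp: circlepath_0_cis vector_derivative_circlepath_0_cis power_mult_distrib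
                   Suc_le_eq mult_ac dest!: gr0_implies_Suc\<close>)
  from has_integral_mult_right[OF this, of "1 / (2 * pi * \<i> * r ^ n)"] show ?thesis
    using r by simp
qed

lemma Caratheodory_coeff_bound_circle:
  fixes q :: "complex \<Rightarrow> complex" and r :: real
  assumes hol: "q holomorphic_on ball 0 1" and re: "\<And>z. z \<in> ball 0 1 \<Longrightarrow> Re (q z) \<ge> 0"
    and r: "0 < r" "r < 1" and n: "n \<ge> 1"
  shows "r ^ n * norm ((deriv ^^ n) q 0 / fact n) \<le> 2 * Re (q 0)"
proof -
  define e where "e t = cis (2 * pi * t)" for t
  define u where "u t = q (r * e t)" for t
  have coeff: "((\<lambda>t. u t * cnj (e t) ^ n) has_integral r ^ n * ((deriv ^^ n) q 0 / fact n)) {0..1}"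
    unfolding u_def e_def by (rule has_integral_circle_Taylor_coeff[OF hol r])
  have "((\<lambda>t. u t * e t ^ n) has_integral 0) {0..1}"
    unfolding u_def e_def by (rule has_integral_circle_Taylor_coeff_negative[OF hol r n])
  then have "((\<lambda>t. cnj (u t) * cnj (e t) ^ n) has_integral 0) {0..1}"
    using has_integral_cnj[of "\<lambda>t. u t * e t ^ n" 0 "{0..1}"] by (simp add: o_def)
  \<comment> \<open>Adding the conjugate of the vanishing integral turns \<open>u\<close> into \<open>2 Re u \<ge> 0\<close>,
    whose mean is \<open>2 Re (q 0)\<close>.\<close>
  from has_integral_add[OF coeff this]
  have re_coeff: "((\<lambda>t. of_real (2 * Re (u t)) * cnj (e t) ^ n)
          has_integral r ^ n * ((deriv ^^ n) q 0 / fact n)) {0..1}"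
    by (simp add: distrib_right[symmetric] complex_add_cnj)
  have re_mean: "((\<lambda>t. 2 * Re (u t)) has_integral 2 * Re (q 0)) {0..1}"
    using has_integral_mult_right[OF has_integral_Re[OF has_integral_circle_Taylor_coeff[OF hol r, of 0]], of 2]
    by (simp add: u_def e_def)
  have "Re (u t) \<ge> 0" for t
    unfolding u_def e_def using r by (intro re) (simp add: norm_mult)
  then have "norm (integral {0..1} (\<lambda>t. of_real (2 * Re (u t)) * cnj (e t) ^ n))
               \<le> integral {0..1} (\<lambda>t. 2 * Re (u t))"
    by (intro integral_norm_bound_integral has_integral_integrable[OF re_coeff]
          has_integral_integrable[OF re_mean]) (simp add: norm_mult norm_power e_def)
  then have "norm (of_real (r ^ n) * ((deriv ^^ n) q 0 / fact n)) \<le> 2 * Re (q 0)"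
    unfolding integral_unique[OF re_coeff] integral_unique[OF re_mean] .
  with r show ?thesis unfolding norm_mult norm_of_real by simp
qed

lemma Caratheodory_coeff_bound:
  fixes p :: "complex \<Rightarrow> complex"
  assumes hol: "p holomorphic_on ball 0 1" and re: "\<And>z. z \<in> ball 0 1 \<Longrightarrow> Re (p z) \<ge> \<beta>"
    and n: "n \<ge> 1"
  shows "norm ((deriv ^^ n) p 0 / fact n) \<le> 2 * (Re (p 0) - \<beta>)"
proof -
  define q where "q z = p z - of_real \<beta>" for z
  have hol_q: "q holomorphic_on ball 0 1"
    unfolding q_def by (intro holomorphic_intros hol)
  have "(deriv ^^ n) q 0 = (deriv ^^ n) p 0"
    unfolding q_def[abs_def] using n
    by (subst higher_deriv_diff[of _ "ball 0 1"]) (auto intro: hol holomorphic_intros)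
  then have "\<forall>\<^sub>F r in at_left 1. r ^ n * norm ((deriv ^^ n) p 0 / fact n) \<le> 2 * (Re (p 0) - \<beta>)"
    using Caratheodory_coeff_bound_circle[OF hol_q, of _ n] re n
    by (intro eventually_at_leftI[of 0]) (auto simp: q_def)
  moreover have "((\<lambda>r. r ^ n * norm ((deriv ^^ n) p 0 / fact n))
                    \<longlongrightarrow> 1 ^ n * norm ((deriv ^^ n) p 0 / fact n)) (at_left (1::real))"
    by (intro tendsto_intros)
  ultimately show ?thesis
    using tendsto_upperbound by fastforce
qed

lemma fps_expansion_nth_tcoef: "fps_expansion h 0 $ n = tcoef h n"
  by (simp add: fps_expansion_def tcoef_def)

lemma fps_power_nth_eq_0_mfold:
  fixes K :: "'a::comm_semiring_1 fps"
  assumes K: "\<And>j. \<not> m dvd j \<Longrightarrow> K $ j = 0" and j: "\<not> m dvd j"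
  shows "(K ^ i) $ j = 0"
  using j
proof (induction i arbitrary: j)
  case 0
  then show ?case by (cases j) auto
next
  case (Suc i)
  have "K $ a * (K ^ i) $ (j - a) = 0" if "a \<le> j" for a
  proof (cases "m dvd a")
    case True
    with Suc.prems that have "\<not> m dvd (j - a)"
      by (metis dvd_add le_add_diff_inverse)
    then show ?thesis using Suc.IH by simp
  qed (simp add: K)
  then show ?case by (simp add: fps_mult_nth)
qed

lemma fps_power_nth_mfold:
  fixes K :: "'a::comm_semiring_1 fps"
  assumes m: "m \<ge> 1" and K: "\<And>j. \<not> m dvd j \<Longrightarrow> K $ j = 0" "K $ 0 = 1"
  shows "(K ^ i) $ m = of_nat i * K $ m"
proof (induction i)
  case 0
  then show ?case using m by simp
next
  case (Suc i)
  have "(K * K ^ i) $ m = (\<Sum>a\<in>{0, m}. K $ a * (K ^ i) $ (m - a))"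
    unfolding fps_mult_nth
  proof (rule sum.mono_neutral_right)
    show "\<forall>a\<in>{0..m} - {0, m}. K $ a * (K ^ i) $ (m - a) = 0"
    proof
      fix a assume "a \<in> {0..m} - {0, m}"
      then have "\<not> m dvd a" by (auto dest: dvd_imp_le)
      then show "K $ a * (K ^ i) $ (m - a) = 0" using K(1) by simp
    qed
  qed (use m in auto)
  also have "\<dots> = (K ^ i) $ m + K $ m"
    using m K(2) by (simp add: fps_nth_power_0)
  finally show ?case using Suc.IH by (simp add: algebra_simps)
qed

lemma fps_compose_X_mult_nth_mfold:
  fixes G K :: "'a::comm_semiring_1 fps"
  assumes m: "m \<ge> 1" and K: "\<And>j. \<not> m dvd j \<Longrightarrow> K $ j = 0"
  shows "(G oo fps_X * K) $ (k * m + 1) = (\<Sum>j\<le>k. G $ (j * m + 1) * (K ^ (j * m + 1)) $ ((k - j) * m))"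
proof -
  define n where "n = k * m + 1"
  have power_nth: "((fps_X * K) ^ i) $ n = (if n < i then 0 else (K ^ i) $ (n - i))" for i
    unfolding power_mult_distrib by (rule fps_X_power_mult_nth)
  have "((fps_X * K) ^ i) $ n = 0" if "i \<le> n" "i \<notin> (\<lambda>j. j * m + 1) ` {..k}" for i
  proof (cases "i = 0")
    case False
    have "\<not> m dvd (n - i)"
    proof
      assume "m dvd (n - i)"
      then have "m dvd (k * m - (i - 1))"
        using False by (simp add: n_def)
      moreover have "i - 1 = k * m - (k * m - (i - 1))"
        using that(1) by (simp add: n_def)
      ultimately have "m dvd (i - 1)"
        by (metis dvd_diff_nat dvd_triv_right)
      then obtain j where j: "i - 1 = m * j" by blast
      moreover have "i - 1 \<le> k * m"
        using that(1) by (simp add: n_def)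
      ultimately have "j * m \<le> k * m"
        by (simp add: mult.commute)
      with m have "j \<le> k" by simp
      moreover have "i = j * m + 1"
        using j False by (simp add: mult.commute)
      ultimately show False using that(2) by auto
    qed
    then show ?thesis using that(1) by (simp add: power_nth fps_power_nth_eq_0_mfold[OF K])
  qed (simp add: n_def)
  then have "(G oo fps_X * K) $ n = (\<Sum>i\<in>(\<lambda>j. j * m + 1) ` {..k}. G $ i * ((fps_X * K) ^ i) $ n)"
    unfolding fps_compose_nth by (intro sum.mono_neutral_right) (auto simp: n_def)
  also have "\<dots> = (\<Sum>j\<le>k. G $ (j * m + 1) * ((fps_X * K) ^ (j * m + 1)) $ n)"
    using m by (subst sum.reindex) (auto simp: inj_on_def)
  also have "\<dots> = (\<Sum>j\<le>k. G $ (j * m + 1) * (K ^ (j * m + 1)) $ ((k - j) * m))"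
    by (intro sum.cong refl, unfold power_nth) (simp add: n_def diff_mult_distrib)
  finally show ?thesis by (simp add: n_def)
qed

lemma fps_compose_inverse_nth_mfold:
  fixes F G :: "'a::comm_ring_1 fps"
  assumes m: "m \<ge> 1" and F0: "F $ 0 = 0" and F1: "F $ 1 = 1"
    and F_mfold: "\<And>n. n mod m \<noteq> 1 mod m \<Longrightarrow> F $ n = 0" and GF: "G oo F = fps_X"
  shows "G $ (m + 1) = - F $ (m + 1)"
    and "G $ (2 * m + 1) = of_nat (m + 1) * (F $ (m + 1)) ^ 2 - F $ (2 * m + 1)"
proof -
  define K where "K = fps_shift 1 F"
  have F_eq: "F = fps_X * K"
    by (rule fps_ext) (auto simp: K_def F0 gr0_conv_Suc)
  have K_nth: "K $ j = F $ (j + 1)" for j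
    by (simp add: K_def)
  have K_mfold: "K $ j = 0" if "\<not> m dvd j" for j
    using that F_mfold mod_eq_dvd_iff_nat[of 1 "j + 1" m] by (auto simp: K_nth)
  have K0: "K $ 0 = 1"
    using F1 by (simp add: K_nth)
  then have K_power_0: "(K ^ i) $ 0 = 1" for i
    by (simp add: fps_nth_power_0)
  have K_power_m: "(K ^ (m + 1)) $ m = of_nat (m + 1) * F $ (m + 1)"
    using fps_power_nth_mfold[OF m K_mfold K0] by (simp add: K_nth del: power_Suc)
  have coeff: "(\<Sum>j\<le>k. G $ (j * m + 1) * (K ^ (j * m + 1)) $ ((k - j) * m)) = fps_X $ (k * m + 1)" for k
    using fps_compose_X_mult_nth_mfold[OF m K_mfold, of G k] by (simp add: GF F_eq[symmetric])
  from coeff[of 0] have G1: "G $ 1 = 1"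
    using K_power_0[of 1] by simp
  from coeff[of 1] m G1 F1 have "F $ (m + 1) + G $ (m + 1) = 0"
    by (simp add: K_nth K_power_0 One_nat_def)
  then show Gm: "G $ (m + 1) = - F $ (m + 1)"
    by (simp add: add_eq_0_iff)
  from coeff[of 2] m G1 F1 K_power_m
  have "F $ (2 * m + 1) + G $ (m + 1) * (of_nat (m + 1) * F $ (m + 1)) + G $ (2 * m + 1) = 0"
    by (simp add: numeral_2_eq_2 K_nth K_power_0 One_nat_def algebra_simps del: power_Suc)
  then have "G $ (2 * m + 1) = - (F $ (2 * m + 1) + - F $ (m + 1) * (of_nat (m + 1) * F $ (m + 1)))"
    unfolding Gm by (simp only: add_eq_0_iff)
  then show "G $ (2 * m + 1) = of_nat (m + 1) * (F $ (m + 1)) ^ 2 - F $ (2 * m + 1)"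
    by (simp add: power2_eq_square algebra_simps)
qed

lemma inv_ext_tcoef:
  assumes m: "m \<ge> 1" and f: "A_m m f" and g: "inv_ext f g"
  shows "tcoef g (m + 1) = - tcoef f (m + 1)"
    and "tcoef g (2 * m + 1) = of_nat (m + 1) * (tcoef f (m + 1)) ^ 2 - tcoef f (2 * m + 1)"
proof -
  have hol_f: "f holomorphic_on ball 0 1" and f0: "f 0 = 0"
    using f by (auto simp: A_m_def)
  have hol_g: "g holomorphic_on ball 0 1"
    and gf: "\<And>z. z \<in> ball 0 1 \<Longrightarrow> f z \<in> ball 0 1 \<Longrightarrow> g (f z) = z"
    using g by (auto simp: inv_ext_def)
  define F where "F = fps_expansion f 0"
  define G where "G = fps_expansion g 0"
  have F_exp: "f has_fps_expansion F"
    unfolding F_def by (rule has_fps_expansion_fps_expansion[OF _ _ hol_f]) auto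
  have G_exp: "g has_fps_expansion G"
    unfolding G_def by (rule has_fps_expansion_fps_expansion[OF _ _ hol_g]) auto
  have F0: "F $ 0 = 0"
    using f0 by (simp add: F_def fps_expansion_def)
  have "open (ball 0 1 \<inter> f -` ball 0 1)"
    using holomorphic_on_imp_continuous_on[OF hol_f] by (rule continuous_open_preimage) auto
  then have "\<forall>\<^sub>F z in nhds 0. z \<in> ball 0 1 \<inter> f -` ball 0 1"
    by (rule eventually_nhds_in_open) (simp add: f0)
  then have "(g \<circ> f) has_fps_expansion fps_X"
    unfolding has_fps_expansion_def by (auto elim!: eventually_mono simp: gf)
  then have "G oo F = fps_X"
    using has_fps_expansion_compose[OF G_exp F_exp F0] fps_expansion_unique_complex by blast
  from fps_compose_inverse_nth_mfold[OF m F0 _ _ this] f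
  show "tcoef g (m + 1) = - tcoef f (m + 1)"
    and "tcoef g (2 * m + 1) = of_nat (m + 1) * (tcoef f (m + 1)) ^ 2 - tcoef f (2 * m + 1)"
    by (simp_all add: F_def G_def fps_expansion_nth_tcoef A_m_def)
qed

lemma conv_radius_mono:
  fixes a b :: "nat \<Rightarrow> 'a::{banach, real_normed_div_algebra}"
  assumes "\<And>n. n \<ge> 1 \<Longrightarrow> norm (a n) \<le> norm (b n)"
  shows "conv_radius b \<le> conv_radius a"
proof (rule conv_radius_geI_ex')
  fix r :: real
  assume r: "0 < r" "ereal r < conv_radius b"
  then have "summable (\<lambda>n. norm (b n * of_real r ^ n))"
    by (intro abs_summable_in_conv_radius) simp
  then show "summable (\<lambda>n. a n * of_real r ^ n)"
    by (rule summable_comparison_test'[where N = 1])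
       (use r assms in \<open>auto simp: norm_mult norm_power intro!: mult_right_mono\<close>)
qed

text \<open>Raising the weight from \<open>(d + n choose d)\<close> to \<open>(d + 1 + n choose d + 1)\<close> is the operator
  \<open>Q \<mapsto> Q + X Q' / (d + 1)\<close>, which does not shrink the radius of convergence.\<close>
lemma fps_conv_radius_binomial_weight:
  fixes H :: "complex fps"
  shows "fps_conv_radius H \<le> fps_conv_radius (Abs_fps (\<lambda>n. of_nat ((d + n) choose d) * H $ n))"
proof (induction d)
  case 0
  then show ?case by (simp add: fps_nth_inverse)
next
  case (Suc d)
  define Q where "Q = Abs_fps (\<lambda>n. of_nat ((d + n) choose d) * H $ n)"
  define c :: complex where "c = of_nat (Suc d)"
  have "Abs_fps (\<lambda>n. of_nat ((Suc d + n) choose Suc d) * H $ n) =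
          fps_const (1 / c) * (fps_X * fps_deriv Q + fps_const c * Q)"
  proof (rule fps_ext)
    fix n
    have "Suc d * ((Suc d + n) choose Suc d) = (Suc d + n) * ((d + n) choose d)"
      using Suc_times_binomial[of d "d + n"] by simp
    then have "c * of_nat ((Suc d + n) choose Suc d) = (of_nat n + c) * of_nat ((d + n) choose d)"
      unfolding c_def by (metis of_nat_add of_nat_mult add.commute)
    moreover have "(fps_X * fps_deriv Q) $ n = of_nat n * Q $ n"
      by (cases n) simp_all
    moreover have "c \<noteq> 0"
      unfolding c_def by (simp only: of_nat_eq_0_iff nat.distinct not_False_eq_True)
    ultimately show "Abs_fps (\<lambda>n. of_nat ((Suc d + n) choose Suc d) * H $ n) $ n =
        (fps_const (1 / c) * (fps_X * fps_deriv Q + fps_const c * Q)) $ n"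
      by (simp add: Q_def field_simps)
  qed
  moreover have "fps_conv_radius Q \<le> fps_conv_radius (fps_X * fps_deriv Q + fps_const c * Q)"
    using fps_conv_radius_add[of "fps_X * fps_deriv Q" "fps_const c * Q"]
      fps_conv_radius_mult[of fps_X "fps_deriv Q"] fps_conv_radius_deriv[of Q]
      fps_conv_radius_mult[of "fps_const c" Q]
    by (simp add: min_def split: if_splits)
  ultimately show ?case
    using Suc.IH fps_conv_radius_mult[of "fps_const (1 / c)" "fps_X * fps_deriv Q + fps_const c * Q"]
    unfolding Q_def by simp
qed

definition rusch_quot_fps :: "nat \<Rightarrow> nat \<Rightarrow> (complex \<Rightarrow> complex) \<Rightarrow> complex fps" where
  "rusch_quot_fps m \<delta> h = Abs_fps (\<lambda>n. if n = 0 then 1 else if m dvd n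
      then of_nat ((\<delta> + n div m) choose (n div m)) * tcoef h (n + 1) else 0)"

lemma fps_conv_radius_rusch_quot_fps:
  assumes hol: "h holomorphic_on ball 0 1"
  shows "1 \<le> fps_conv_radius (rusch_quot_fps m \<delta> h)"
proof -
  define H where "H = fps_shift 1 (fps_expansion h 0)"
  have "1 \<le> fps_conv_radius (fps_expansion h 0)"
    using conv_radius_fps_expansion[of h 0 1] hol by (simp add: one_ereal_def)
  also have "\<dots> = fps_conv_radius H"
    by (simp add: H_def)
  also have "\<dots> \<le> fps_conv_radius (Abs_fps (\<lambda>n. of_nat ((\<delta> + n) choose \<delta>) * H $ n))"
    by (rule fps_conv_radius_binomial_weight)
  also have "\<dots> \<le> fps_conv_radius (rusch_quot_fps m \<delta> h)"
    unfolding fps_conv_radius_def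
  proof (rule conv_radius_mono)
    fix n :: nat
    assume "n \<ge> 1"
    have "(\<delta> + n div m) choose (n div m) = (\<delta> + n div m) choose \<delta>"
      using binomial_symmetric[of "n div m" "\<delta> + n div m"] by simp
    also have "\<dots> \<le> (\<delta> + n) choose \<delta>"
      by (rule binomial_right_mono) (simp add: div_le_dividend)
    finally show "norm (rusch_quot_fps m \<delta> h $ n)
                    \<le> norm (Abs_fps (\<lambda>n. of_nat ((\<delta> + n) choose \<delta>) * H $ n) $ n)"
      using \<open>n \<ge> 1\<close>
      by (auto simp: rusch_quot_fps_def H_def fps_expansion_nth_tcoef norm_mult intro!: mult_right_mono)
  qed
  finally show ?thesis .
qed

lemma rusch_quot_eq_eval_fps:
  assumes m: "m \<ge> 1" and hol: "h holomorphic_on ball 0 1" and z: "z \<in> ball 0 1"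
  shows "rusch_quot m \<delta> h z = eval_fps (rusch_quot_fps m \<delta> h) z"
proof -
  define R where "R = rusch_quot_fps m \<delta> h"
  have "ereal (norm z) < 1"
    using z by simp
  also have "1 \<le> fps_conv_radius R"
    unfolding R_def by (rule fps_conv_radius_rusch_quot_fps[OF hol])
  finally have "(\<lambda>n. R $ n * z ^ n) sums eval_fps R z"
    unfolding eval_fps_def by (intro summable_sums summable_fps)
  moreover have "strict_mono (\<lambda>k. m * k)"
    using m by (auto simp: strict_mono_def)
  ultimately have "(\<lambda>k. R $ (m * k) * z ^ (m * k)) sums eval_fps R z"
    by (subst sums_mono_reindex) (auto simp: R_def rusch_quot_fps_def)
  then have "(\<lambda>k. R $ (m * Suc k) * z ^ (m * Suc k)) sums (eval_fps R z - 1)"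
    by (subst sums_Suc_iff) (simp add: R_def rusch_quot_fps_def)
  moreover have "R $ (m * Suc k) = of_nat ((\<delta> + Suc k) choose Suc k) * tcoef h (m * Suc k + 1)" for k
    using m by (simp add: R_def rusch_quot_fps_def del: binomial_Suc_Suc)
  ultimately show ?thesis
    unfolding rusch_quot_def R_def by (simp add: sums_iff)
qed

lemma rusch_quot_has_fps_expansion:
  assumes m: "m \<ge> 1" and hol: "h holomorphic_on ball 0 1"
  shows "rusch_quot m \<delta> h has_fps_expansion rusch_quot_fps m \<delta> h"
  unfolding has_fps_expansion_def
proof
  show "0 < fps_conv_radius (rusch_quot_fps m \<delta> h)"
    by (rule less_le_trans[OF _ fps_conv_radius_rusch_quot_fps[OF hol]]) simp
  have "\<forall>\<^sub>F z in nhds 0. z \<in> ball (0::complex) 1"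
    by (intro eventually_nhds_in_open) auto
  then show "\<forall>\<^sub>F z in nhds 0. eval_fps (rusch_quot_fps m \<delta> h) z = rusch_quot m \<delta> h z"
    by eventually_elim (simp add: rusch_quot_eq_eval_fps[OF m hol])
qed

lemma rusch_quot_holomorphic:
  assumes m: "m \<ge> 1" and hol: "h holomorphic_on ball 0 1"
  shows "rusch_quot m \<delta> h holomorphic_on ball 0 1"
proof -
  have "ball (0::complex) 1 \<subseteq> eball 0 (fps_conv_radius (rusch_quot_fps m \<delta> h))"
  proof
    fix z :: complex
    assume "z \<in> ball 0 1"
    then have "ereal (norm z) < 1" by simp
    also have "1 \<le> fps_conv_radius (rusch_quot_fps m \<delta> h)"
      by (rule fps_conv_radius_rusch_quot_fps[OF hol])
    finally show "z \<in> eball 0 (fps_conv_radius (rusch_quot_fps m \<delta> h))" by simp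
  qed
  then have "eval_fps (rusch_quot_fps m \<delta> h) holomorphic_on ball 0 1"
    by (rule holomorphic_on_eval_fps)
  then show ?thesis
    by (rule holomorphic_cong[THEN iffD1, rotated 2]) (auto simp: rusch_quot_eq_eval_fps[OF m hol])
qed

definition J_fps ::
    "nat \<Rightarrow> complex \<Rightarrow> real \<Rightarrow> real \<Rightarrow> nat \<Rightarrow> (complex \<Rightarrow> complex) \<Rightarrow> complex fps" where
  "J_fps m \<tau> lam \<gamma> \<delta> h = 1 + fps_const (1 / \<tau>) *
     (fps_const (of_real ((1 - lam) * (1 - \<gamma>))) * rusch_quot_fps m \<delta> h
      + fps_const (of_real (lam * (\<gamma> + 1) + \<gamma>)) * fps_deriv (fps_X * rusch_quot_fps m \<delta> h)
      + fps_const (of_real (lam * \<gamma>)) *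
          (fps_X * fps_deriv (fps_deriv (fps_X * rusch_quot_fps m \<delta> h)) - 2) - 1)"

text \<open>\<open>J_weight \<lambda> \<gamma> n\<close> is \<open>(1 - \<lambda>) (1 - \<gamma>) + (\<lambda> (\<gamma> + 1) + \<gamma>) (n + 1) + \<lambda> \<gamma> n (n + 1)\<close> in closed form:
  the factor that the three terms of \<open>J\<close> contribute to its \<open>n\<close>-th coefficient.\<close>
definition J_weight :: "real \<Rightarrow> real \<Rightarrow> nat \<Rightarrow> real" where
  "J_weight lam \<gamma> n = 1 + real n * (lam + \<gamma>) + lam * \<gamma> * ((real n + 1)^2 + 1)"

lemma J_fun_has_fps_expansion:
  assumes m: "m \<ge> 1" and hol: "h holomorphic_on ball 0 1"
  shows "J_fun m \<tau> lam \<gamma> \<delta> h has_fps_expansion J_fps m \<tau> lam \<gamma> \<delta> h"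
proof -
  have "rusch m \<delta> h has_fps_expansion fps_X * rusch_quot_fps m \<delta> h"
    unfolding rusch_def[abs_def] by (intro fps_expansion_intros rusch_quot_has_fps_expansion[OF m hol])
  then show ?thesis
    unfolding J_fun_def[abs_def] J_fps_def
    by (intro fps_expansion_intros rusch_quot_has_fps_expansion[OF m hol])
qed

lemma J_fun_holomorphic:
  assumes m: "m \<ge> 1" and hol: "h holomorphic_on ball 0 1"
  shows "J_fun m \<tau> lam \<gamma> \<delta> h holomorphic_on ball 0 1"
proof -
  have "rusch m \<delta> h holomorphic_on ball 0 1"
    unfolding rusch_def[abs_def] by (intro holomorphic_intros rusch_quot_holomorphic[OF m hol])
  then show ?thesis
    unfolding J_fun_def[abs_def] by (intro holomorphic_intros rusch_quot_holomorphic[OF m hol]) auto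
qed

lemma J_fps_nth_0: "J_fps m \<tau> lam \<gamma> \<delta> h $ 0 = 1"
  by (cases "\<tau> = 0") (simp_all add: J_fps_def rusch_quot_fps_def fps_numeral_nth field_simps)

lemma J_fps_nth:
  assumes "n \<ge> 1"
  shows "J_fps m \<tau> lam \<gamma> \<delta> h $ n =
           of_real (J_weight lam \<gamma> n) / \<tau> * rusch_quot_fps m \<delta> h $ n"
proof -
  obtain k where k: "n = Suc k"
    using assms by (cases n) auto
  show ?thesis
    unfolding J_fps_def J_weight_def k
    by (simp add: algebra_simps add_divide_distrib power2_eq_square fps_numeral_nth)
qed

lemma J_fun_coeff_bound:
  assumes m: "m \<ge> 1" and hol: "h holomorphic_on ball 0 1"
    and re: "\<forall>z\<in>ball 0 1. Re (J_fun m \<tau> lam \<gamma> \<delta> h z) > \<beta>"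
    and \<tau>: "\<tau> \<noteq> 0" and k: "k \<ge> 1"
  shows "\<bar>J_weight lam \<gamma> (m * k)\<bar> * real ((\<delta> + k) choose k) * norm (tcoef h (m * k + 1))
           \<le> 2 * norm \<tau> * (1 - \<beta>)"
proof -
  let ?J = "J_fun m \<tau> lam \<gamma> \<delta> h"
  note J_exp = J_fun_has_fps_expansion[OF m hol]
  have mk: "m * k \<ge> 1"
    using m k by simp
  have "norm ((deriv ^^ (m * k)) ?J 0 / fact (m * k)) \<le> 2 * (Re (?J 0) - \<beta>)"
    by (rule Caratheodory_coeff_bound[OF J_fun_holomorphic[OF m hol] _ mk])
       (use re in \<open>auto intro: less_imp_le\<close>)
  moreover have "?J 0 = 1"
    using fps_nth_fps_expansion[OF J_exp, where n = 0] by (simp add: J_fps_nth_0)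
  ultimately have "norm (J_fps m \<tau> lam \<gamma> \<delta> h $ (m * k)) \<le> 2 * (1 - \<beta>)"
    by (simp add: fps_nth_fps_expansion[OF J_exp])
  moreover have "rusch_quot_fps m \<delta> h $ (m * k) = of_nat ((\<delta> + k) choose k) * tcoef h (m * k + 1)"
    using m k by (simp add: rusch_quot_fps_def)
  then have "norm (J_fps m \<tau> lam \<gamma> \<delta> h $ (m * k)) =
      \<bar>J_weight lam \<gamma> (m * k)\<bar> * real ((\<delta> + k) choose k) * norm (tcoef h (m * k + 1)) / norm \<tau>"
    by (simp add: J_fps_nth[OF mk] norm_mult norm_divide)
  ultimately show ?thesis
    using \<tau> by (simp add: pos_divide_le_eq mult_ac)
qed

lemma J_weight_pos: "lam \<ge> 0 \<Longrightarrow> \<gamma> \<ge> 0 \<Longrightarrow> J_weight lam \<gamma> n > 0"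
  unfolding J_weight_def by (intro add_pos_nonneg) auto

lemma J_weight_double: "J_weight lam \<gamma> (2 * m) = Phi1 lam \<gamma> m"
  by (simp add: J_weight_def Phi1_def algebra_simps)

lemma real_choose_two: "real ((d + 2) choose 2) = (real d + 1) * (real d + 2) / 2"
  by (induction d) (simp_all add: numeral_2_eq_2 field_simps)

lemma norm_le_two_sqrt_by_triangle:
  fixes a c :: complex and K N E :: real
  assumes K: "K > 0" and N: "N > 0"
    and c: "K * norm c \<le> 2 * E" and d: "K * norm (of_real N * a\<^sup>2 - c) \<le> 2 * E"
  shows "norm a \<le> 2 * sqrt (E / (K * N))"
proof -
  have "N * (norm a)\<^sup>2 \<le> norm c + norm (of_real N * a\<^sup>2 - c)"
    using norm_triangle_sub[of "of_real N * a\<^sup>2" c] N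
    unfolding norm_mult norm_power norm_of_real by (simp add: add.commute)
  then have "K * (N * (norm a)\<^sup>2) \<le> K * norm c + K * norm (of_real N * a\<^sup>2 - c)"
    using K by (simp add: distrib_left[symmetric])
  also have "\<dots> \<le> 4 * E"
    using c d by simp
  finally have "(norm a)\<^sup>2 \<le> 4 * (E / (K * N))"
    using K N by (simp add: pos_le_divide_eq mult_ac)
  then have "norm a \<le> sqrt (4 * (E / (K * N)))"
    by (rule real_le_rsqrt)
  then show ?thesis
    unfolding real_sqrt_mult real_sqrt_four .
qed

theorem theorem2:
  fixes lam \<gamma> \<beta> :: real and \<tau> :: complex and \<delta> m :: nat and f :: "complex \<Rightarrow> complex"
  assumes "lam \<ge> 0" and "0 \<le> \<gamma>" and "\<gamma> \<le> 1" and "0 \<le> \<beta>" and "\<beta> < 1"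
    and "\<tau> \<noteq> 0" and "m \<ge> 1"
    and "Theta m \<tau> lam \<gamma> \<delta> \<beta> f"
  shows "(norm (tcoef f (m + 1)) \<le>
           min (2 * norm \<tau> * (1 - \<beta>) /
                  ((real \<delta> + 1) * (1 + real m * (lam + \<gamma>) + lam * \<gamma> * ((real m + 1)^2 + 1))))
               (2 * sqrt (2 * norm \<tau> * (1 - \<beta>) /
                  ((real \<delta> + 1) * (real \<delta> + 2) * (real m + 1) * Phi1 lam \<gamma> m)))) \<and>
         norm (tcoef f (2 * m + 1)) \<le>
           4 * norm \<tau> * (1 - \<beta>) /
             ((real \<delta> + 1) * (real \<delta> + 2) * (1 + 2 * (lam + \<gamma>) * real m + lam * \<gamma> * ((2 * real m + 1)^2 + 1)))"
proof -
  obtain g where f: "A_m m f" and g: "inv_ext f g"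
    and J_f: "\<forall>z\<in>ball 0 1. Re (J_fun m \<tau> lam \<gamma> \<delta> f z) > \<beta>"
    and J_g: "\<forall>w\<in>ball 0 1. Re (J_fun m \<tau> lam \<gamma> \<delta> g w) > \<beta>"
    using assms(8) by (auto simp: Theta_def Sigma_m_def)
  have hol_f: "f holomorphic_on ball 0 1" and hol_g: "g holomorphic_on ball 0 1"
    using f g by (auto simp: A_m_def inv_ext_def)
  define E where "E = 2 * norm \<tau> * (1 - \<beta>)"
  define K where "K = (real \<delta> + 1) * (real \<delta> + 2) * Phi1 lam \<gamma> m"
  have W: "J_weight lam \<gamma> m > 0" "Phi1 lam \<gamma> m > 0"
    using J_weight_pos[OF assms(1,2)] J_weight_double by metis+
  then have K: "K > 0"
    by (simp add: K_def)
  have two: "1 \<le> (2::nat)" by simp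
  note bound_f = J_fun_coeff_bound[OF assms(7) hol_f J_f assms(6)]
  note bound_g = J_fun_coeff_bound[OF assms(7) hol_g J_g assms(6)]
  have "(real \<delta> + 1) * J_weight lam \<gamma> m * norm (tcoef f (m + 1)) \<le> E"
    using bound_f[OF order_refl] W(1) by (simp add: E_def add.commute mult_ac)
  then have bound1: "norm (tcoef f (m + 1)) \<le> E / ((real \<delta> + 1) * J_weight lam \<gamma> m)"
    using W(1) by (simp add: pos_le_divide_eq mult.commute)
  have coeff3: "K * norm (tcoef f (2 * m + 1)) \<le> 2 * E"
    using bound_f[OF two] W(2)
    unfolding mult.commute[of m 2] J_weight_double real_choose_two by (simp add: K_def E_def mult_ac)
  then have bound3: "norm (tcoef f (2 * m + 1)) \<le> 2 * E / K"
    using K by (simp add: pos_le_divide_eq mult.commute)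
  have "K * norm (of_nat (m + 1) * (tcoef f (m + 1))\<^sup>2 - tcoef f (2 * m + 1)) \<le> 2 * E"
    using bound_g[OF two] W(2)
    unfolding mult.commute[of m 2] J_weight_double real_choose_two inv_ext_tcoef(2)[OF assms(7) f g]
    by (simp add: K_def E_def mult_ac)
  with K coeff3 have bound2: "norm (tcoef f (m + 1)) \<le> 2 * sqrt (E / (K * real (m + 1)))"
    by (intro norm_le_two_sqrt_by_triangle) simp_all
  have bound2_rhs: "E / (K * real (m + 1)) =
      2 * norm \<tau> * (1 - \<beta>) / ((real \<delta> + 1) * (real \<delta> + 2) * (real m + 1) * Phi1 lam \<gamma> m)"
    by (simp add: E_def K_def mult_ac)
  have bound3_rhs: "2 * E / K = 4 * norm \<tau> * (1 - \<beta>) /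
      ((real \<delta> + 1) * (real \<delta> + 2) * (1 + 2 * (lam + \<gamma>) * real m + lam * \<gamma> * ((2 * real m + 1)^2 + 1)))"
    by (simp add: E_def K_def Phi1_def mult_ac)
  show ?thesis
    using min.boundedI[OF bound1 bound2[unfolded bound2_rhs]] bound3[unfolded bound3_rhs]
    unfolding E_def J_weight_def by (rule conjI)
qed

end
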